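(* In the typical setting below, with $\nu_{p-1}=\lfloor\frac{a+(p-1)\ell}{p}\rfloor$, one has $\nu_{p-1}\le e+\frac{(p-1)(r-1)c}{r}$, with equality if and only if $t\ge\frac{rpe}{p-1}-r$.
   Context: Typical setting: $p$ is an odd prime, $K$ a finite extension of $\mathbb{Q}_p$ with absolute ramification index $e$, and $L/K$ a degree $p$ extension whose normal closure $\widetilde L$ is totally ramified over $K$. Then $\mathrm{Gal}(\widetilde L/K)\cong C_p\rtimes C_r$ with $r=[\widetilde L:L]$ dividing $p-1$. The ramification jump $t$ is the integer with $G_t$ of order $p$ and $G_{t+1}=1$ (lower numbering ramification groups of $\widetilde L/K$); one has $1\le t\le rpe/(p-1)$. Assume $L/K$ is typical, i.e. $p\nmid t$ (equivalently $t<rpe/(p-1)$). Let $c$ be the remainder of $t$ mod $r$, $b=(t-pc)/r\in\mathbb{Z}$, $\ell=cp+b=\frac{pc(r-1)+t}{r}$, $a$ the remainder of $\ell$ mod $p$ (so $1\le a\le p-1$). *)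

theory Defs
  imports "HOL-Analysis.Analysis"
begin

end

theory Submission
  imports Defs
begin

text \<open>
  Write \<open>l = p q + a\<close> with \<open>0 \<le> a < p\<close>. Then \<open>\<nu>\<^sub>p\<^sub>-\<^sub>1 = l - q\<close> exactly, and
  \<open>e + (p-1)(r-1)c/r - \<nu>\<^sub>p\<^sub>-\<^sub>1 = D/(pr)\<close> with the integer \<open>D = pre - (p-1)t - ar\<close>.
  Both \<open>p\<close> and \<open>r\<close> divide \<open>D\<close> (the latter because \<open>r\<close> divides \<open>p-1\<close>), and they are
  coprime, so \<open>pr\<close> divides \<open>D\<close>. The bound \<open>(p-1)t < rpe\<close> gives \<open>D > -pr\<close>, hence \<open>D \<ge> 0\<close>.
  Since \<open>D \<equiv> t - ar\<close> mod \<open>p\<close> and \<open>p \<nmid> t\<close>, we have \<open>a \<ge> 1\<close>, so the condition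
  \<open>t \<ge> rpe/(p-1) - r\<close>, which reads \<open>D \<le> r(p-1-a)\<close>, forces \<open>D < pr\<close>, i.e. \<open>D = 0\<close>.
\<close>

lemma floor_mod_plus_pred_mult_div:
  fixes l p :: int
  assumes "p \<noteq> 0"
  shows "\<lfloor>real_of_int (l mod p + (p - 1) * l) / real_of_int p\<rfloor> = l - l div p"
proof -
  have "l mod p + (p - 1) * l = p * (l - l div p)"
    by (simp add: algebra_simps minus_div_mult_eq_mod [symmetric])
  then show ?thesis
    using assms by simp
qed

lemma mult_diff_div_eq:
  fixes p r t c b l :: int
  assumes "r * b = t - p * c" and "l = c * p + b"
  shows "p * r * (l - l div p) = p * ((p - 1) * (r - 1) * c) + (p - 1) * t + r * (l mod p)"
proof -
  define q where "q = l div p"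
  define a where "a = l mod p"
  have l: "l = p * q + a"
    by (simp add: q_def a_def)
  have t: "t = r * l - p * c * (r - 1)"
    using assms by (simp add: algebra_simps)
  show ?thesis
    unfolding q_def [symmetric] a_def [symmetric] t by (simp add: l algebra_simps)
qed

lemma of_int_add_divide_eq_if_mult_eq:
  fixes p r e x D \<nu> :: int
  assumes "p * r * \<nu> + D = p * r * e + p * x" and "p \<noteq> 0" and "r \<noteq> 0"
  shows "real_of_int e + real_of_int x / real_of_int r
      = real_of_int \<nu> + real_of_int D / real_of_int (p * r)"
proof -
  have "real_of_int (p * r * \<nu> + D) = real_of_int (p * r * e + p * x)"
    using assms(1) by (simp only:)
  then show ?thesis
    using assms(2,3) by (simp add: field_simps)
qed

lemma of_int_divide_le_iff:
  fixes q x y :: int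
  assumes "0 < q"
  shows "real_of_int x / real_of_int q \<le> real_of_int y \<longleftrightarrow> x \<le> y * q"
proof -
  have "real_of_int x / real_of_int q \<le> real_of_int y \<longleftrightarrow> real_of_int x \<le> real_of_int (y * q)"
    using assms by (simp add: divide_le_eq)
  then show ?thesis
    by linarith
qed

lemma mult_dvd_if_dvd_diff_one:
  fixes p r d :: int
  assumes "p dvd d" and "r dvd d" and "r dvd p - 1"
  shows "p * r dvd d"
proof -
  have "coprime p r"
    using coprime_divisors [OF dvd_refl \<open>r dvd p - 1\<close>, of p] by simp
  with assms(1,2) show ?thesis
    by (simp add: divides_mult)
qed

lemma dvd_nonneg_and_le_iff_eq_0:
  fixes m d B :: int
  assumes "m dvd d" and "- m < d" and "0 \<le> B" and "B < m"
  shows "0 \<le> d" and "d \<le> B \<longleftrightarrow> d = 0"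
proof -
  have "d = 0" if "\<bar>d\<bar> < m"
  proof (rule ccontr)
    assume "d \<noteq> 0"
    then have "\<bar>m\<bar> \<le> \<bar>d\<bar>"
      using dvd_imp_le_int \<open>m dvd d\<close> by blast
    with \<open>\<bar>d\<bar> < m\<close> show False
      by simp
  qed
  with assms(2-4) show "0 \<le> d" and "d \<le> B \<longleftrightarrow> d = 0"
    by fastforce+
qed

lemma defect_nonneg_and_eq_0_iff:
  fixes p r e t a :: int
  defines "D \<equiv> p * r * e - (p - 1) * t - a * r"
  assumes "p dvd D" and "r dvd p - 1" and "\<not> p dvd t"
    and "r \<ge> 1" and "0 \<le> a" and "a < p" and "(p - 1) * t < r * p * e"
  shows "0 \<le> D" and "r * p * e \<le> (t + r) * (p - 1) \<longleftrightarrow> D = 0"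
proof -
  have "p * r dvd D"
    using assms(2,3) unfolding D_def by (simp add: mult_dvd_if_dvd_diff_one)
  have "t - a * r = D - p * (r * e - t)"
    unfolding D_def by (simp add: algebra_simps)
  with \<open>p dvd D\<close> \<open>\<not> p dvd t\<close> have "a \<noteq> 0"
    by (metis diff_zero dvd_diff dvd_triv_left mult_zero_left)
  with \<open>0 \<le> a\<close> \<open>a < p\<close> have "0 \<le> r * (p - 1 - a)" "r * (p - 1 - a) < p * r"
    using mult_right_mono [of "1 + a" p r] mult_pos_pos [of r "1 + a"] \<open>r \<ge> 1\<close>
    by (simp_all add: algebra_simps)
  moreover have "- (p * r) < D"
    using \<open>(p - 1) * t < r * p * e\<close> \<open>a < p\<close> \<open>r \<ge> 1\<close> mult_right_mono [of a "p - 1" r]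
    unfolding D_def by (simp add: algebra_simps)
  ultimately have "0 \<le> D" and "D \<le> r * (p - 1 - a) \<longleftrightarrow> D = 0"
    using dvd_nonneg_and_le_iff_eq_0 [OF \<open>p * r dvd D\<close>] by blast+
  moreover have "r * p * e \<le> (t + r) * (p - 1) \<longleftrightarrow> D \<le> r * (p - 1 - a)"
    unfolding D_def by (simp add: algebra_simps)
  ultimately show "0 \<le> D" and "r * p * e \<le> (t + r) * (p - 1) \<longleftrightarrow> D = 0"
    by simp_all
qed

theorem corollary6p6:
  fixes p r e t c b l a :: int and \<nu> :: int
  assumes "prime p" and "odd p"
    and "e \<ge> 1"
    and "r \<ge> 1" and "r dvd (p - 1)"
    and "1 \<le> t" and "real_of_int t \<le> real_of_int (r * p * e) / real_of_int (p - 1)"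
    and "\<not> p dvd t"
    and "real_of_int t < real_of_int (r * p * e) / real_of_int (p - 1)"
    and "c = t mod r"
    and "r * b = t - p * c"
    and "l = c * p + b"
    and "a = l mod p"
    and "\<nu> = \<lfloor>real_of_int (a + (p - 1) * l) / real_of_int p\<rfloor>"
  shows "real_of_int \<nu> \<le> real_of_int e + real_of_int ((p - 1) * (r - 1) * c) / real_of_int r
    \<and> (real_of_int \<nu> = real_of_int e + real_of_int ((p - 1) * (r - 1) * c) / real_of_int r
         \<longleftrightarrow> real_of_int t \<ge> real_of_int (r * p * e) / real_of_int (p - 1) - real_of_int r)"
proof -
  define D where "D = p * r * e - (p - 1) * t - a * r"
  have p2: "p \<ge> 2"
    using \<open>prime p\<close> prime_ge_2_int by blast
  have \<nu>: "\<nu> = l - l div p"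
    using assms(13,14) p2 floor_mod_plus_pred_mult_div by simp
  have identity: "p * r * \<nu> + D = p * r * e + p * ((p - 1) * (r - 1) * c)"
    using mult_diff_div_eq [OF assms(11,12)] unfolding \<nu> D_def assms(13) by (simp add: algebra_simps)
  then have "p dvd D"
    by (metis dvd_add_right_iff dvd_triv_left mult.assoc)
  moreover have "(p - 1) * t < r * p * e"
    using assms(9) of_int_divide_le_iff [of "p - 1" "r * p * e" t] p2 by (simp add: mult.commute)
  moreover have "0 \<le> a" "a < p"
    using assms(13) p2 by simp_all
  ultimately have "0 \<le> D" and D_eq_0_iff: "r * p * e \<le> (t + r) * (p - 1) \<longleftrightarrow> D = 0"
    using defect_nonneg_and_eq_0_iff [of p r e t a] \<open>r dvd p - 1\<close> \<open>\<not> p dvd t\<close> \<open>r \<ge> 1\<close>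
    unfolding D_def by blast+
  have condition:
    "real_of_int t \<ge> real_of_int (r * p * e) / real_of_int (p - 1) - real_of_int r \<longleftrightarrow> D = 0"
    using of_int_divide_le_iff [of "p - 1" "r * p * e" "t + r"] p2
    unfolding D_eq_0_iff [symmetric] by (simp add: diff_le_eq)
  define \<delta> where "\<delta> = real_of_int D / real_of_int (p * r)"
  have "0 \<le> \<delta>" and "\<delta> = 0 \<longleftrightarrow> D = 0"
    unfolding \<delta>_def using \<open>0 \<le> D\<close> p2 \<open>r \<ge> 1\<close> by simp_all
  moreover have "real_of_int e + real_of_int ((p - 1) * (r - 1) * c) / real_of_int r = real_of_int \<nu> + \<delta>"
    unfolding \<delta>_def using of_int_add_divide_eq_if_mult_eq [OF identity] p2 \<open>r \<ge> 1\<close> by simp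
  ultimately show ?thesis
    unfolding condition by simp
qed

end
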